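(* Let $F$ be a field with $F=\mathbb Q$ or $F=\mathbb Z_p$ ($p$ prime), and let $A$ be a prime $F$-algebra generated as an $F$-algebra by two principally nilpotent elements $x,y$ such that $x+y$ is a minimal non-nilpotent element of $A$ and $xA+yA=\mathcal J(A)$ is the unique maximal right (and left) ideal of $A$. Then $A$ embeds (as a subring) into a countable prime von Neumann regular ring $R$ such that $J\cap A\neq 0$ for every non-zero ideal $J$ of $R$.
   Context: All rings are associative with unit; "ideal" means two-sided ideal. A ring $R$ is von Neumann regular (VNR) if for every $x\in R$ there is $y\in R$ with $x=xyx$. An element $a$ of a ring $A$ is principally nilpotent if every element of the right ideal $aA$ is nilpotent. An element $b$ of $A$ is minimal non-nilpotent if $b$ is not nilpotent and for every non-zero ideal $J$ of $A$ there is $n$ with $b^n\in J$. $\mathcal J(A)$ is the Jacobson radical. *)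

theory Defs
  imports "HOL-Algebra.Algebra"
begin

definition rat_ring :: "rat ring" where
  "rat_ring = \<lparr>carrier = UNIV, monoid.mult = (*), one = 1, ring.zero = 0, add = (+)\<rparr>"

definition right_ideal :: "'a set \<Rightarrow> ('a, 'b) ring_scheme \<Rightarrow> bool" where
  "right_ideal I R \<longleftrightarrow> additive_subgroup I R \<and>
     (\<forall>a\<in>I. \<forall>r\<in>carrier R. a \<otimes>\<^bsub>R\<^esub> r \<in> I)"

definition left_ideal :: "'a set \<Rightarrow> ('a, 'b) ring_scheme \<Rightarrow> bool" where
  "left_ideal I R \<longleftrightarrow> additive_subgroup I R \<and>
     (\<forall>a\<in>I. \<forall>r\<in>carrier R. r \<otimes>\<^bsub>R\<^esub> a \<in> I)"

definition maximal_right_ideal :: "'a set \<Rightarrow> ('a, 'b) ring_scheme \<Rightarrow> bool" where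
  "maximal_right_ideal I R \<longleftrightarrow> right_ideal I R \<and> I \<noteq> carrier R \<and>
     (\<forall>K. right_ideal K R \<and> I \<subseteq> K \<and> K \<noteq> carrier R \<longrightarrow> K = I)"

definition maximal_left_ideal :: "'a set \<Rightarrow> ('a, 'b) ring_scheme \<Rightarrow> bool" where
  "maximal_left_ideal I R \<longleftrightarrow> left_ideal I R \<and> I \<noteq> carrier R \<and>
     (\<forall>K. left_ideal K R \<and> I \<subseteq> K \<and> K \<noteq> carrier R \<longrightarrow> K = I)"

definition jacobson_radical :: "('a, 'b) ring_scheme \<Rightarrow> 'a set" where
  "jacobson_radical R = carrier R \<inter> \<Inter> {I. maximal_right_ideal I R}"

definition nilpotent_elem :: "('a, 'b) ring_scheme \<Rightarrow> 'a \<Rightarrow> bool" where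
  "nilpotent_elem R a \<longleftrightarrow> (\<exists>n::nat. a [^]\<^bsub>R\<^esub> n = \<zero>\<^bsub>R\<^esub>)"

definition principally_nilpotent :: "('a, 'b) ring_scheme \<Rightarrow> 'a \<Rightarrow> bool" where
  "principally_nilpotent R a \<longleftrightarrow> (\<forall>r\<in>carrier R. nilpotent_elem R (a \<otimes>\<^bsub>R\<^esub> r))"

definition minimal_non_nilpotent :: "('a, 'b) ring_scheme \<Rightarrow> 'a \<Rightarrow> bool" where
  "minimal_non_nilpotent R b \<longleftrightarrow> \<not> nilpotent_elem R b \<and>
     (\<forall>J. ideal J R \<and> J \<noteq> {\<zero>\<^bsub>R\<^esub>} \<longrightarrow> (\<exists>n::nat. b [^]\<^bsub>R\<^esub> n \<in> J))"

definition prime_ring :: "('a, 'b) ring_scheme \<Rightarrow> bool" where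
  "prime_ring R \<longleftrightarrow> ring R \<and> \<one>\<^bsub>R\<^esub> \<noteq> \<zero>\<^bsub>R\<^esub> \<and>
     (\<forall>a\<in>carrier R. \<forall>b\<in>carrier R.
        (\<forall>r\<in>carrier R. a \<otimes>\<^bsub>R\<^esub> r \<otimes>\<^bsub>R\<^esub> b = \<zero>\<^bsub>R\<^esub>) \<longrightarrow> a = \<zero>\<^bsub>R\<^esub> \<or> b = \<zero>\<^bsub>R\<^esub>)"

definition von_neumann_regular :: "('a, 'b) ring_scheme \<Rightarrow> bool" where
  "von_neumann_regular R \<longleftrightarrow> ring R \<and>
     (\<forall>x\<in>carrier R. \<exists>y\<in>carrier R. x = x \<otimes>\<^bsub>R\<^esub> y \<otimes>\<^bsub>R\<^esub> x)"

definition algebra_via :: "('f, 'c) ring_scheme \<Rightarrow> ('a, 'b) ring_scheme \<Rightarrow> ('f \<Rightarrow> 'a) \<Rightarrow> bool" where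
  "algebra_via F A phi \<longleftrightarrow> field F \<and> ring A \<and> phi \<in> ring_hom F A \<and>
     (\<forall>c\<in>carrier F. \<forall>a\<in>carrier A. phi c \<otimes>\<^bsub>A\<^esub> a = a \<otimes>\<^bsub>A\<^esub> phi c)"

end

theory Submission
  imports Defs
begin

(*
  A is countable, being generated by two elements over a countable field.  Left multiplication
  embeds A into End_F(A), which is von Neumann regular because every subspace has a complement
  (Zorn).  Closing the image of A under the ring operations and a fixed choice of quasi-inverses
  yields a countable regular subring T.  Let M be an ideal of T maximal with M \<inter> A = 0 (Zorn
  again).  Then every nonzero ideal of T/M meets the image of A, regularity passes to T/M, and
  T/M is prime: if a r b = 0 for all r with a, b \<noteq> 0, the left annihilator ideal of b contains a
  nonzero a' \<in> A, the right annihilator ideal of a' contains a nonzero b' \<in> A, and a' A b' = 0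
  contradicts primeness of A.
*)

section \<open>Countable closures\<close>

definition ring_closure_step :: "('a, 'b) ring_scheme \<Rightarrow> ('a \<Rightarrow> 'a) \<Rightarrow> 'a set \<Rightarrow> 'a set" where
  "ring_closure_step R q Y = insert \<one>\<^bsub>R\<^esub> (Y \<union> q ` Y \<union> a_inv R ` Y
     \<union> (\<lambda>(a, b). a \<oplus>\<^bsub>R\<^esub> b) ` (Y \<times> Y) \<union> (\<lambda>(a, b). a \<otimes>\<^bsub>R\<^esub> b) ` (Y \<times> Y))"

lemma ring_closure_stepI:
  fixes R (structure)
  shows "\<one> \<in> ring_closure_step R q Y" "a \<in> Y \<Longrightarrow> a \<in> ring_closure_step R q Y"
    "a \<in> Y \<Longrightarrow> q a \<in> ring_closure_step R q Y" "a \<in> Y \<Longrightarrow> \<ominus> a \<in> ring_closure_step R q Y"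
    "a \<in> Y \<Longrightarrow> b \<in> Y \<Longrightarrow> a \<oplus> b \<in> ring_closure_step R q Y"
    "a \<in> Y \<Longrightarrow> b \<in> Y \<Longrightarrow> a \<otimes> b \<in> ring_closure_step R q Y"
  unfolding ring_closure_step_def by (auto intro!: rev_image_eqI[of "(a, b)"])

primrec ring_closure_layer :: "('a, 'b) ring_scheme \<Rightarrow> ('a \<Rightarrow> 'a) \<Rightarrow> 'a set \<Rightarrow> nat \<Rightarrow> 'a set" where
  "ring_closure_layer R q S 0 = S"
| "ring_closure_layer R q S (Suc n) = ring_closure_step R q (ring_closure_layer R q S n)"

lemma ring_closure_layer_mono: "m \<le> n \<Longrightarrow> ring_closure_layer R q S m \<subseteq> ring_closure_layer R q S n"
  by (induction n) (auto simp: le_Suc_eq intro: ring_closure_stepI(2))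

text \<open>S closed under \<one>, \<oplus>, \<otimes>, \<ominus> and q in countably many rounds.  With q = id it contains
  generate_ring; with q a choice of quasi-inverses it is a von Neumann regular subring.\<close>

definition ring_closure_with :: "('a, 'b) ring_scheme \<Rightarrow> ('a \<Rightarrow> 'a) \<Rightarrow> 'a set \<Rightarrow> 'a set" where
  "ring_closure_with R q S = (\<Union>n. ring_closure_layer R q S n)"

lemma countable_ring_closure_with:
  assumes "countable S" shows "countable (ring_closure_with R q S)"
proof -
  have "countable (ring_closure_layer R q S n)" for n
    by (induction n) (simp_all add: assms ring_closure_step_def)
  then show ?thesis unfolding ring_closure_with_def by (intro countable_UN) auto
qed

lemma ring_closure_with_closed:
  fixes R (structure) and q :: "'a \<Rightarrow> 'a" and S :: "'a set"
  defines "C \<equiv> ring_closure_with R q S"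
  shows "S \<subseteq> C" "\<one> \<in> C" "a \<in> C \<Longrightarrow> q a \<in> C" "a \<in> C \<Longrightarrow> \<ominus> a \<in> C"
    and "a \<in> C \<Longrightarrow> b \<in> C \<Longrightarrow> a \<oplus> b \<in> C" "a \<in> C \<Longrightarrow> b \<in> C \<Longrightarrow> a \<otimes> b \<in> C"
proof -
  have layer: "ring_closure_layer R q S n \<subseteq> C" for n
    unfolding C_def ring_closure_with_def by blast
  have common: "\<exists>n. a \<in> ring_closure_layer R q S n \<and> b \<in> ring_closure_layer R q S n"
    if ab: "a \<in> C" "b \<in> C" for a b
  proof -
    obtain m n where "a \<in> ring_closure_layer R q S m" "b \<in> ring_closure_layer R q S n"
      using ab unfolding C_def ring_closure_with_def by blast
    then show ?thesis
      using ring_closure_layer_mono[of _ "max m n"] by (meson max.cobounded1 max.cobounded2 subsetD)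
  qed
  show "S \<subseteq> C" using layer[of 0] by simp
  show "\<one> \<in> C" by (rule subsetD[OF layer[of "Suc 0"]]) (simp add: ring_closure_stepI)
  show "q a \<in> C" "\<ominus> a \<in> C" if a: "a \<in> C" for a
  proof -
    obtain n where n: "a \<in> ring_closure_layer R q S n" using common[OF a a] by blast
    show "q a \<in> C" "\<ominus> a \<in> C"
      by (rule subsetD[OF layer[of "Suc n"]], simp add: ring_closure_stepI n)+
  qed
  show "a \<oplus> b \<in> C" "a \<otimes> b \<in> C" if ab: "a \<in> C" "b \<in> C" for a b
  proof -
    obtain n where n: "a \<in> ring_closure_layer R q S n" "b \<in> ring_closure_layer R q S n"
      using common[OF ab] by blast
    show "a \<oplus> b \<in> C" "a \<otimes> b \<in> C"
      by (rule subsetD[OF layer[of "Suc n"]], simp add: ring_closure_stepI n)+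
  qed
qed

lemma countable_generate_ring:
  assumes "countable H" shows "countable (generate_ring R H)"
proof -
  have "generate_ring R H \<subseteq> ring_closure_with R id H"
  proof
    fix z assume "z \<in> generate_ring R H"
    then show "z \<in> ring_closure_with R id H"
      by induction
        (blast intro: ring_closure_with_closed(1)[THEN subsetD] ring_closure_with_closed(2,4-6))+
  qed
  then show ?thesis using countable_ring_closure_with[OF assms] by (rule countable_subset)
qed

lemma ring_closure_with_subset_carrier:
  fixes R (structure)
  assumes "ring R" "S \<subseteq> carrier R" "\<And>a. a \<in> carrier R \<Longrightarrow> q a \<in> carrier R"
  shows "ring_closure_with R q S \<subseteq> carrier R"
proof -
  interpret ring R by fact
  have "ring_closure_layer R q S n \<subseteq> carrier R" for n
    by (induction n) (use assms(2,3) in \<open>auto simp: ring_closure_step_def\<close>)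
  then show ?thesis unfolding ring_closure_with_def by blast
qed

lemma countable_vnr_subring:
  fixes E (structure)
  assumes vnr: "von_neumann_regular E" and S: "S \<subseteq> carrier E" "countable S"
  shows "\<exists>T. subring T E \<and> S \<subseteq> T \<and> countable T \<and> von_neumann_regular (E\<lparr>carrier := T\<rparr>)"
proof -
  interpret ring E using vnr unfolding von_neumann_regular_def by blast
  define q where "q f = (SOME g. g \<in> carrier E \<and> f = f \<otimes> g \<otimes> f)" for f
  have q: "q f \<in> carrier E \<and> f = f \<otimes> q f \<otimes> f" if "f \<in> carrier E" for f
    unfolding q_def by (rule someI_ex) (use vnr that in \<open>auto simp: von_neumann_regular_def\<close>)
  define T where "T = ring_closure_with E q S"
  have TE: "T \<subseteq> carrier E"
    unfolding T_def using ring_axioms S(1)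
    by (rule ring_closure_with_subset_carrier) (use q in blast)
  have sub: "subring T E"
    using TE unfolding T_def by (rule subringI) (fact ring_closure_with_closed)+
  have "von_neumann_regular (E\<lparr>carrier := T\<rparr>)"
    unfolding von_neumann_regular_def
  proof (intro conjI ballI)
    show "ring (E\<lparr>carrier := T\<rparr>)" using sub by (rule subring_is_ring)
    fix f assume "f \<in> carrier (E\<lparr>carrier := T\<rparr>)"
    then have f: "f \<in> T" by simp
    then have "q f \<in> T" unfolding T_def by (rule ring_closure_with_closed)
    then show "\<exists>g\<in>carrier (E\<lparr>carrier := T\<rparr>). f = f \<otimes>\<^bsub>E\<lparr>carrier := T\<rparr>\<^esub> g \<otimes>\<^bsub>E\<lparr>carrier := T\<rparr>\<^esub> f"
      using q f TE by auto
  qed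
  moreover have "S \<subseteq> T" "countable T"
    unfolding T_def using S(2)
    by (simp_all add: ring_closure_with_closed countable_ring_closure_with)
  ultimately show ?thesis using sub by blast
qed

section \<open>Essential quotients\<close>

lemma von_neumann_regular_surj_hom_image:
  assumes vnr: "von_neumann_regular R" and S: "ring S"
    and h: "h \<in> ring_hom R S" "h ` carrier R = carrier S"
  shows "von_neumann_regular S"
  unfolding von_neumann_regular_def
proof (intro conjI ballI)
  interpret R: ring R using vnr unfolding von_neumann_regular_def by blast
  show "ring S" by fact
  fix z assume "z \<in> carrier S"
  then obtain a where a: "a \<in> carrier R" "z = h a" using h(2) by auto
  then obtain b where b: "b \<in> carrier R" "a = a \<otimes>\<^bsub>R\<^esub> b \<otimes>\<^bsub>R\<^esub> a"
    using vnr unfolding von_neumann_regular_def by blast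
  then have "h a = h a \<otimes>\<^bsub>S\<^esub> h b \<otimes>\<^bsub>S\<^esub> h a"
    using a ring_hom_memE[OF h(1)] by (metis R.m_closed)
  then show "\<exists>y\<in>carrier S. z = z \<otimes>\<^bsub>S\<^esub> y \<otimes>\<^bsub>S\<^esub> z"
    using a b ring_hom_memE(1)[OF h(1)] by auto
qed

lemma subset_chain_Union_common:
  assumes "subset.chain \<A> \<C>" "a \<in> \<Union>\<C>" "b \<in> \<Union>\<C>"
  shows "\<exists>I\<in>\<C>. a \<in> I \<and> b \<in> I"
  using assms unfolding subset_chain_def by blast

lemma (in ring) ideal_chain_Union:
  assumes chain: "subset.chain {I. ideal I R} \<C>" and ne: "\<C> \<noteq> {}"
  shows "ideal (\<Union>\<C>) R"
proof -
  have ideals: "\<And>I. I \<in> \<C> \<Longrightarrow> ideal I R" using chain unfolding subset_chain_def by blast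
  show ?thesis
  proof (rule idealI[OF ring_axioms add.subgroupI])
    show "\<Union>\<C> \<subseteq> carrier R" using ideals ideal.Icarr by (meson UnionE subsetI)
    obtain I where I: "I \<in> \<C>" using ne by blast
    interpret ideal I R using ideals I .
    show "\<Union>\<C> \<noteq> {}" using I zero_closed by blast
  next
    fix a assume "a \<in> \<Union>\<C>"
    then obtain I where I: "I \<in> \<C>" "a \<in> I" by blast
    interpret ideal I R using ideals I(1) .
    show "\<ominus> a \<in> \<Union>\<C>" using I a_inv_closed by blast
    fix x assume "x \<in> carrier R"
    then show "x \<otimes> a \<in> \<Union>\<C>" "a \<otimes> x \<in> \<Union>\<C>" using I I_l_closed I_r_closed by blast+
  next
    fix a b assume "a \<in> \<Union>\<C>" "b \<in> \<Union>\<C>"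
    then obtain I where I: "I \<in> \<C>" "a \<in> I" "b \<in> I"
      using subset_chain_Union_common[OF chain] by blast
    interpret ideal I R using ideals I(1) .
    show "a \<oplus> b \<in> \<Union>\<C>" using I a_closed by blast
  qed
qed

lemma (in ring) exists_maximal_ideal_avoiding:
  "\<exists>M. ideal M R \<and> M \<inter> S \<subseteq> {\<zero>} \<and> (\<forall>N. ideal N R \<and> M \<subseteq> N \<and> N \<inter> S \<subseteq> {\<zero>} \<longrightarrow> N = M)"
proof -
  let ?Z = "{M. ideal M R \<and> M \<inter> S \<subseteq> {\<zero>}}"
  have "\<exists>M\<in>?Z. \<forall>N\<in>?Z. M \<subseteq> N \<longrightarrow> N = M"
  proof (rule subset_Zorn_nonempty)
    have "{\<zero>} \<in> ?Z" using zeroideal by simp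
    then show "?Z \<noteq> {}" by (metis empty_iff)
    fix \<C> assume ne: "\<C> \<noteq> {}" and chain: "subset.chain ?Z \<C>"
    then have "subset.chain {I. ideal I R} \<C>" by (simp add: subset_chain_def subset_iff)
    then have "ideal (\<Union>\<C>) R" using ne by (rule ideal_chain_Union)
    moreover have "\<Union>\<C> \<inter> S \<subseteq> {\<zero>}" using chain by (auto simp: subset_chain_def)
    ultimately show "\<Union>\<C> \<in> ?Z" by simp
  qed
  then show ?thesis by (metis (no_types, lifting) mem_Collect_eq)
qed

lemma (in ring) ideal_left_annihilator:
  assumes b: "b \<in> carrier R"
  shows "ideal {u \<in> carrier R. \<forall>r\<in>carrier R. u \<otimes> r \<otimes> b = \<zero>} R" (is "ideal ?P R")
proof (rule idealI[OF ring_axioms add.subgroupI])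
  show "?P \<subseteq> carrier R" by auto
  have "\<zero> \<in> ?P" using b by simp
  then show "?P \<noteq> {}" by auto
next
  fix u v assume "u \<in> ?P" "v \<in> ?P"
  then show "u \<oplus> v \<in> ?P" using b by (simp add: l_distr)
next
  fix u assume u: "u \<in> ?P"
  then show "\<ominus> u \<in> ?P" using b by (simp add: l_minus)
  fix x assume x: "x \<in> carrier R"
  have "x \<otimes> u \<otimes> r \<otimes> b = x \<otimes> (u \<otimes> r \<otimes> b)" if "r \<in> carrier R" for r
    using u x b that by (simp add: m_assoc)
  then show "x \<otimes> u \<in> ?P" using u x by simp
  have "u \<otimes> x \<otimes> r \<otimes> b = u \<otimes> (x \<otimes> r) \<otimes> b" if "r \<in> carrier R" for r
    using u x b that by (simp add: m_assoc)
  then show "u \<otimes> x \<in> ?P" using u x by simp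
qed

lemma (in ring) ideal_right_annihilator:
  assumes a: "a \<in> carrier R"
  shows "ideal {u \<in> carrier R. \<forall>r\<in>carrier R. a \<otimes> r \<otimes> u = \<zero>} R" (is "ideal ?P R")
proof (rule idealI[OF ring_axioms add.subgroupI])
  show "?P \<subseteq> carrier R" by auto
  have "\<zero> \<in> ?P" using a by simp
  then show "?P \<noteq> {}" by auto
next
  fix u v assume "u \<in> ?P" "v \<in> ?P"
  then show "u \<oplus> v \<in> ?P" using a by (simp add: r_distr)
next
  fix u assume u: "u \<in> ?P"
  then show "\<ominus> u \<in> ?P" using a by (simp add: r_minus)
  fix x assume x: "x \<in> carrier R"
  have "a \<otimes> r \<otimes> (x \<otimes> u) = a \<otimes> (r \<otimes> x) \<otimes> u" if "r \<in> carrier R" for r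
    using u x a that by (simp add: m_assoc)
  then show "x \<otimes> u \<in> ?P" using u x by simp
  have "a \<otimes> r \<otimes> (u \<otimes> x) = a \<otimes> r \<otimes> u \<otimes> x" if "r \<in> carrier R" for r
    using u x a that by (simp add: m_assoc)
  then show "u \<otimes> x \<in> ?P" using u x by simp
qed

lemma (in ring_hom_ring) nonzero_preimage_in_ideal:
  assumes meets: "\<forall>J. ideal J S \<and> J \<noteq> {\<zero>\<^bsub>S\<^esub>} \<longrightarrow> J \<inter> h ` carrier R \<noteq> {\<zero>\<^bsub>S\<^esub>}"
    and J: "ideal J S" and u: "u \<in> J" "u \<noteq> \<zero>\<^bsub>S\<^esub>"
  shows "\<exists>a\<in>carrier R. a \<noteq> \<zero> \<and> h a \<in> J"
proof -
  have "\<zero>\<^bsub>S\<^esub> \<in> J \<inter> h ` carrier R"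
    using additive_subgroup.zero_closed[OF ideal.axioms(1)[OF J]] hom_zero by force
  moreover have "J \<inter> h ` carrier R \<noteq> {\<zero>\<^bsub>S\<^esub>}" using meets J u by auto
  ultimately obtain a where "a \<in> carrier R" "h a \<in> J" "h a \<noteq> \<zero>\<^bsub>S\<^esub>" by auto
  then show ?thesis using hom_zero by (metis R.zero_closed)
qed

lemma prime_ring_if_ideals_meet_prime_image:
  fixes R (structure)
  assumes R: "ring R" and A: "prime_ring A"
    and h: "h \<in> ring_hom A R" and inj: "inj_on h (carrier A)"
    and meets: "\<forall>J. ideal J R \<and> J \<noteq> {\<zero>} \<longrightarrow> J \<inter> h ` carrier A \<noteq> {\<zero>}"
  shows "prime_ring R"
proof -
  interpret R: ring R by fact
  interpret A: ring A using A unfolding prime_ring_def by simp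
  interpret H: ring_hom_ring A R h using A.ring_axioms R h by (rule ring_hom_ringI2)
  have A_nontrivial: "\<one>\<^bsub>A\<^esub> \<noteq> \<zero>\<^bsub>A\<^esub>" using A unfolding prime_ring_def by simp
  note preimage = H.nonzero_preimage_in_ideal[OF meets]
  show ?thesis unfolding prime_ring_def
  proof (intro conjI ballI impI)
    show "ring R" by fact
    show "\<one> \<noteq> \<zero>"
      using inj A_nontrivial H.hom_one H.hom_zero by (metis A.one_closed A.zero_closed inj_onD)
    fix a b assume a: "a \<in> carrier R" and b: "b \<in> carrier R"
      and ab: "\<forall>r\<in>carrier R. a \<otimes> r \<otimes> b = \<zero>"
    show "a = \<zero> \<or> b = \<zero>"
    proof (rule ccontr)
      assume "\<not> (a = \<zero> \<or> b = \<zero>)"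
      then have "a \<noteq> \<zero>" "b \<noteq> \<zero>" by auto
      obtain a' where a': "a' \<in> carrier A" "a' \<noteq> \<zero>\<^bsub>A\<^esub>" "\<forall>r\<in>carrier R. h a' \<otimes> r \<otimes> b = \<zero>"
        using preimage[OF R.ideal_left_annihilator[OF b], of a] a ab \<open>a \<noteq> \<zero>\<close> by auto
      obtain b' where b': "b' \<in> carrier A" "b' \<noteq> \<zero>\<^bsub>A\<^esub>" "\<forall>r\<in>carrier R. h a' \<otimes> r \<otimes> h b' = \<zero>"
        using preimage[OF R.ideal_right_annihilator[OF H.hom_closed[OF a'(1)]], of b] b a'(3) \<open>b \<noteq> \<zero>\<close>
        by auto
      have "a' \<otimes>\<^bsub>A\<^esub> r \<otimes>\<^bsub>A\<^esub> b' = \<zero>\<^bsub>A\<^esub>" if r: "r \<in> carrier A" for r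
      proof -
        have "h (a' \<otimes>\<^bsub>A\<^esub> r \<otimes>\<^bsub>A\<^esub> b') = h \<zero>\<^bsub>A\<^esub>" using a' b' r by simp
        from inj_onD[OF inj this] show ?thesis using a' b' r by simp
      qed
      then show False using A a' b' unfolding prime_ring_def by blast
    qed
  qed
qed

lemma countable_ring_iso_nat_ring:
  fixes Q (structure)
  assumes Q: "ring Q" and cnt: "countable (carrier Q)"
  shows "\<exists>(R :: nat ring) e. ring R \<and> e \<in> ring_iso Q R"
proof -
  interpret ring Q by fact
  obtain e :: "'a \<Rightarrow> nat" where e: "inj_on e (carrier Q)" using cnt unfolding countable_def by blast
  define d where "d = inv_into (carrier Q) e"
  define R :: "nat ring" where "R =
    \<lparr>carrier = e ` carrier Q, monoid.mult = (\<lambda>a b. e (d a \<otimes> d b)), one = e \<one>,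
     ring.zero = e \<zero>, add = (\<lambda>a b. e (d a \<oplus> d b))\<rparr>"
  have iso: "e \<in> ring_iso Q R"
    by (rule ring_iso_memI) (simp_all add: R_def d_def e bij_betw_def inv_into_f_f)
  have "ring (R\<lparr>ring.zero := e \<zero>\<rparr>)" by (rule ring_iso_imp_img_ring[OF iso])
  moreover have "R\<lparr>ring.zero := e \<zero>\<rparr> = R" by (simp add: R_def)
  ultimately show ?thesis using iso by auto
qed

lemma countable_quotient_nat_ring:
  fixes T (structure)
  assumes T: "ring T" and cnt: "countable (carrier T)" and M: "ideal M T"
  shows "\<exists>(R :: nat ring) \<psi>. ring R \<and> \<psi> \<in> ring_hom T R \<and> \<psi> ` carrier T = carrier R \<and>
           (\<forall>t\<in>carrier T. \<psi> t = \<zero>\<^bsub>R\<^esub> \<longleftrightarrow> t \<in> M)"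
proof -
  interpret ring T by fact
  interpret M: ideal M T by fact
  let ?Q = "T Quot M"
  have Q: "ring ?Q" by (rule M.quotient_is_ring)
  have carrier_Q: "carrier ?Q = (+>) M ` carrier T"
    unfolding FactRing_def A_RCOSETS_def' by auto
  obtain R :: "nat ring" and e where R: "ring R" and e: "e \<in> ring_iso ?Q R"
    using countable_ring_iso_nat_ring[OF Q] cnt carrier_Q by auto
  have e_hom: "e \<in> ring_hom ?Q R" and e_inj: "inj_on e (carrier ?Q)"
    and e_surj: "e ` carrier ?Q = carrier R"
    using e unfolding ring_iso_def bij_betw_def by auto
  define \<psi> where "\<psi> = e \<circ> (+>) M"
  have "\<psi> \<in> ring_hom T R" unfolding \<psi>_def by (rule ring_hom_trans[OF M.rcos_ring_hom e_hom])
  moreover have "\<psi> ` carrier T = carrier R"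
    unfolding \<psi>_def using carrier_Q e_surj by (simp add: image_comp)
  moreover have "\<psi> t = \<zero>\<^bsub>R\<^esub> \<longleftrightarrow> t \<in> M" if t: "t \<in> carrier T" for t
  proof -
    have zero: "e M = \<zero>\<^bsub>R\<^esub>" and M_in: "M \<in> carrier ?Q"
      using ring_hom_zero[OF e_hom Q R] ring.ring_simprules(2)[OF Q] by (simp_all add: FactRing_def)
    have "M +> t \<in> carrier ?Q" using t carrier_Q by auto
    then have "\<psi> t = \<zero>\<^bsub>R\<^esub> \<longleftrightarrow> M +> t = M"
      unfolding \<psi>_def using inj_on_eq_iff[OF e_inj _ M_in] zero by simp
    also have "\<dots> \<longleftrightarrow> t \<in> M" using t M.rcos_const_imp_mem a_rcos_zero[OF M] by blast
    finally show ?thesis .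
  qed
  ultimately show ?thesis using R by blast
qed

lemma ideal_meets_if_kernel_maximal_avoiding:
  fixes T (structure)
  assumes T: "ring T" and R: "ring R" and \<psi>: "\<psi> \<in> ring_hom T R" "\<psi> ` carrier T = carrier R"
    and ker: "\<forall>t\<in>carrier T. \<psi> t = \<zero>\<^bsub>R\<^esub> \<longleftrightarrow> t \<in> M"
    and M: "ideal M T" "\<forall>N. ideal N T \<and> M \<subseteq> N \<and> N \<inter> S \<subseteq> {\<zero>} \<longrightarrow> N = M"
    and J: "ideal J R" "J \<noteq> {\<zero>\<^bsub>R\<^esub>}"
  shows "\<exists>s\<in>S. s \<noteq> \<zero> \<and> \<psi> s \<in> J"
proof -
  interpret \<Psi>: ring_hom_ring T R \<psi> using T R \<psi>(1) by (rule ring_hom_ringI2)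
  interpret J: ideal J R by fact
  define N where "N = {t \<in> carrier T. \<psi> t \<in> J}"
  have "ideal N T" unfolding N_def by (rule \<Psi>.ideal_vimage[OF J(1)])
  moreover have "M \<subseteq> N"
  proof
    fix m assume "m \<in> M"
    then have "m \<in> carrier T" "\<psi> m = \<zero>\<^bsub>R\<^esub>" using ker ideal.Icarr[OF M(1)] by auto
    then show "m \<in> N" unfolding N_def using J.zero_closed by simp
  qed
  moreover have "N \<noteq> M"
  proof -
    obtain j where j: "j \<in> J" "j \<noteq> \<zero>\<^bsub>R\<^esub>" using J(2) J.zero_closed by auto
    then obtain t where "t \<in> carrier T" "\<psi> t = j" using \<psi>(2) J.Icarr by (metis imageE)
    then have "t \<in> N" "t \<notin> M" using j ker unfolding N_def by auto
    then show ?thesis by auto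
  qed
  ultimately have "\<not> N \<inter> S \<subseteq> {\<zero>}" using M(2) by auto
  then show ?thesis unfolding N_def by auto
qed

lemma (in ring_hom_ring) inj_on_if_kernel_trivial:
  assumes "\<And>a. a \<in> carrier R \<Longrightarrow> h a = \<zero>\<^bsub>S\<^esub> \<Longrightarrow> a = \<zero>"
  shows "inj_on h (carrier R)"
proof (rule trivial_ker_imp_inj)
  show "a_kernel R S h = {\<zero>}"
    unfolding a_kernel_def' using assms by (simp add: set_eq_iff) (metis R.zero_closed hom_zero)
qed

lemma countable_prime_vnr_essential_quotient:
  fixes T (structure)
  assumes vnr: "von_neumann_regular T" and cnt: "countable (carrier T)"
    and A: "prime_ring A" and h: "h \<in> ring_hom A T" "inj_on h (carrier A)"
  shows "\<exists>(R :: nat ring) g. ring R \<and> countable (carrier R) \<and> prime_ring R \<and>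
           von_neumann_regular R \<and> g \<in> ring_hom A R \<and> inj_on g (carrier A) \<and>
           (\<forall>J. ideal J R \<and> J \<noteq> {\<zero>\<^bsub>R\<^esub>} \<longrightarrow> J \<inter> g ` carrier A \<noteq> {\<zero>\<^bsub>R\<^esub>})"
proof -
  interpret T: ring T using vnr unfolding von_neumann_regular_def by blast
  interpret A: ring A using A unfolding prime_ring_def by blast
  interpret H: ring_hom_ring A T h using A.ring_axioms T.ring_axioms h(1) by (rule ring_hom_ringI2)
  obtain M where M: "ideal M T" "M \<inter> h ` carrier A \<subseteq> {\<zero>}"
    "\<forall>N. ideal N T \<and> M \<subseteq> N \<and> N \<inter> h ` carrier A \<subseteq> {\<zero>} \<longrightarrow> N = M"
    using T.exists_maximal_ideal_avoiding[of "h ` carrier A"] by (elim exE conjE) (rule that)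
  obtain R :: "nat ring" and \<psi>
    where R: "ring R" and \<psi>: "\<psi> \<in> ring_hom T R" "\<psi> ` carrier T = carrier R"
    and ker: "\<forall>t\<in>carrier T. \<psi> t = \<zero>\<^bsub>R\<^esub> \<longleftrightarrow> t \<in> M"
    using countable_quotient_nat_ring[OF T.ring_axioms cnt M(1)] by auto
  define g where "g = \<psi> \<circ> h"
  have g: "g \<in> ring_hom A R" unfolding g_def by (rule ring_hom_trans[OF h(1) \<psi>(1)])
  have g_zero: "g a = \<zero>\<^bsub>R\<^esub> \<longleftrightarrow> a = \<zero>\<^bsub>A\<^esub>" if a: "a \<in> carrier A" for a
  proof -
    have "g a = \<zero>\<^bsub>R\<^esub> \<longleftrightarrow> h a \<in> M" unfolding g_def using ker a by simp
    also have "\<dots> \<longleftrightarrow> h a = \<zero>"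
      using M(2) a additive_subgroup.zero_closed[OF ideal.axioms(1)[OF M(1)]] by auto
    also have "\<dots> \<longleftrightarrow> a = \<zero>\<^bsub>A\<^esub>" using inj_on_eq_iff[OF h(2) a A.zero_closed] by simp
    finally show ?thesis .
  qed
  interpret G: ring_hom_ring A R g using A.ring_axioms R g by (rule ring_hom_ringI2)
  have inj: "inj_on g (carrier A)" using g_zero by (intro G.inj_on_if_kernel_trivial) auto
  have meets: "\<forall>J. ideal J R \<and> J \<noteq> {\<zero>\<^bsub>R\<^esub>} \<longrightarrow> J \<inter> g ` carrier A \<noteq> {\<zero>\<^bsub>R\<^esub>}"
  proof (intro allI impI)
    fix J assume "ideal J R \<and> J \<noteq> {\<zero>\<^bsub>R\<^esub>}"
    then obtain a where a: "a \<in> carrier A" "h a \<noteq> \<zero>" "g a \<in> J"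
      using ideal_meets_if_kernel_maximal_avoiding[OF T.ring_axioms R \<psi> ker M(1,3)]
      unfolding g_def by auto
    then have "g a \<noteq> \<zero>\<^bsub>R\<^esub>" using g_zero by auto
    then show "J \<inter> g ` carrier A \<noteq> {\<zero>\<^bsub>R\<^esub>}" using a by auto
  qed
  have "von_neumann_regular R" by (rule von_neumann_regular_surj_hom_image[OF vnr R \<psi>])
  moreover have "prime_ring R" by (rule prime_ring_if_ideals_meet_prime_image[OF R A g inj meets])
  ultimately show ?thesis using R g inj meets by (intro exI[of _ R] exI[of _ g]) simp
qed

section \<open>Endomorphism rings of vector spaces\<close>

locale vector_space = module + field R

lemma (in abelian_group) minus_eq_zero_iff:
  "x \<in> carrier G \<Longrightarrow> y \<in> carrier G \<Longrightarrow> x \<ominus> y = \<zero> \<longleftrightarrow> x = y"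
  by (metis add.inv_solve_right l_zero minus_eq zero_closed)

lemma restrict_eq_extensionalI:
  "g \<in> extensional A \<Longrightarrow> (\<And>x. x \<in> A \<Longrightarrow> f x = g x) \<Longrightarrow> restrict f A = g"
  by (metis extensional_restrict restrict_ext)

definition complementary ::
    "('r, 'c) ring_scheme \<Rightarrow> ('r, 'v, 'd) module_scheme \<Rightarrow> 'v set \<Rightarrow> 'v set \<Rightarrow> bool" where
  "complementary R M W C \<longleftrightarrow> submodule W R M \<and> submodule C R M \<and> W \<inter> C \<subseteq> {\<zero>\<^bsub>M\<^esub>} \<and>
     (\<forall>v\<in>carrier M. \<exists>w\<in>W. \<exists>c\<in>C. v = w \<oplus>\<^bsub>M\<^esub> c)"

definition linear_endo ::
    "('r, 'c) ring_scheme \<Rightarrow> ('r, 'v, 'd) module_scheme \<Rightarrow> ('v \<Rightarrow> 'v) \<Rightarrow> bool" where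
  "linear_endo R M f \<longleftrightarrow> f \<in> carrier M \<rightarrow> carrier M \<and>
     (\<forall>u\<in>carrier M. \<forall>v\<in>carrier M. f (u \<oplus>\<^bsub>M\<^esub> v) = f u \<oplus>\<^bsub>M\<^esub> f v) \<and>
     (\<forall>a\<in>carrier R. \<forall>v\<in>carrier M. f (a \<odot>\<^bsub>M\<^esub> v) = a \<odot>\<^bsub>M\<^esub> f v)"

definition endomorphism_ring ::
    "('r, 'c) ring_scheme \<Rightarrow> ('r, 'v, 'd) module_scheme \<Rightarrow> ('v \<Rightarrow> 'v) ring" where
  "endomorphism_ring R M =
     \<lparr>carrier = {f. linear_endo R M f \<and> f \<in> extensional (carrier M)},
      monoid.mult = compose (carrier M), one = (\<lambda>v\<in>carrier M. v),
      ring.zero = (\<lambda>v\<in>carrier M. \<zero>\<^bsub>M\<^esub>), add = (\<lambda>f g. \<lambda>v\<in>carrier M. f v \<oplus>\<^bsub>M\<^esub> g v)\<rparr>"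

context module
begin

lemma submodule_minus_closed:
  assumes "submodule W R M" "u \<in> W" "v \<in> W"
  shows "u \<ominus>\<^bsub>M\<^esub> v \<in> W"
  using submoduleE(3,5)[OF assms(1)] assms(2,3) by (simp add: M.minus_eq)

lemma submodule_zero_closed: "submodule W R M \<Longrightarrow> \<zero>\<^bsub>M\<^esub> \<in> W"
  using subgroup.one_closed[OF submodule.axioms(1)] by fastforce

lemma submodule_zero: "submodule {\<zero>\<^bsub>M\<^esub>} R M"
  by (rule submoduleI) auto

lemma submodule_chain_Union:
  assumes chain: "subset.chain {C. submodule C R M} \<C>" and ne: "\<C> \<noteq> {}"
  shows "submodule (\<Union>\<C>) R M"
proof -
  have subs: "\<And>C. C \<in> \<C> \<Longrightarrow> submodule C R M" using chain unfolding subset_chain_def by auto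
  show ?thesis
  proof (rule submoduleI)
    show "\<Union>\<C> \<subseteq> carrier M" using subs submoduleE(1) by auto
    obtain C where C: "C \<in> \<C>" using ne by auto
    then show "\<zero>\<^bsub>M\<^esub> \<in> \<Union>\<C>" using submodule_zero_closed[OF subs[OF C]] by auto
  next
    fix a assume "a \<in> \<Union>\<C>"
    then obtain C where C: "C \<in> \<C>" "a \<in> C" by auto
    then show "\<ominus>\<^bsub>M\<^esub> a \<in> \<Union>\<C>" using submoduleE(3)[OF subs] by auto
    fix r assume "r \<in> carrier R"
    then show "r \<odot>\<^bsub>M\<^esub> a \<in> \<Union>\<C>" using C submoduleE(4)[OF subs] by auto
  next
    fix a b assume "a \<in> \<Union>\<C>" "b \<in> \<Union>\<C>"
    then obtain C where C: "C \<in> \<C>" "a \<in> C" "b \<in> C" using subset_chain_Union_common[OF chain] by auto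
    then show "a \<oplus>\<^bsub>M\<^esub> b \<in> \<Union>\<C>" using submoduleE(5)[OF subs] by auto
  qed
qed

lemma submodule_add_line:
  assumes C: "submodule C R M" and v: "v \<in> carrier M"
  shows "submodule {c \<oplus>\<^bsub>M\<^esub> a \<odot>\<^bsub>M\<^esub> v | c a. c \<in> C \<and> a \<in> carrier R} R M" (is "submodule ?D R M")
proof (rule submoduleI)
  show "?D \<subseteq> carrier M" using submoduleE(1)[OF C] v by auto
  have "\<zero>\<^bsub>M\<^esub> = \<zero>\<^bsub>M\<^esub> \<oplus>\<^bsub>M\<^esub> \<zero> \<odot>\<^bsub>M\<^esub> v" using v by simp
  moreover have "\<zero>\<^bsub>M\<^esub> \<in> C" by (rule submodule_zero_closed[OF C])
  ultimately show "\<zero>\<^bsub>M\<^esub> \<in> ?D" by blast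
next
  fix x assume "x \<in> ?D"
  then obtain c a where ca: "c \<in> C" "a \<in> carrier R" "x = c \<oplus>\<^bsub>M\<^esub> a \<odot>\<^bsub>M\<^esub> v" by auto
  have c: "c \<in> carrier M" using ca(1) submoduleE(1)[OF C] by auto
  have "\<ominus>\<^bsub>M\<^esub> x = \<ominus>\<^bsub>M\<^esub> c \<oplus>\<^bsub>M\<^esub> (\<ominus> a) \<odot>\<^bsub>M\<^esub> v"
    using ca c v by (simp add: M.minus_add smult_l_minus)
  then show "\<ominus>\<^bsub>M\<^esub> x \<in> ?D" using ca submoduleE(3)[OF C] by blast
  fix r assume r: "r \<in> carrier R"
  have "r \<odot>\<^bsub>M\<^esub> x = r \<odot>\<^bsub>M\<^esub> c \<oplus>\<^bsub>M\<^esub> (r \<otimes> a) \<odot>\<^bsub>M\<^esub> v"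
    using ca c v r by (simp add: smult_r_distr smult_assoc1)
  then show "r \<odot>\<^bsub>M\<^esub> x \<in> ?D" using ca r submoduleE(4)[OF C] by blast
next
  fix x y assume "x \<in> ?D" "y \<in> ?D"
  then obtain c a d b where cadb: "c \<in> C" "a \<in> carrier R" "x = c \<oplus>\<^bsub>M\<^esub> a \<odot>\<^bsub>M\<^esub> v"
    "d \<in> C" "b \<in> carrier R" "y = d \<oplus>\<^bsub>M\<^esub> b \<odot>\<^bsub>M\<^esub> v" by auto
  have cd: "c \<in> carrier M" "d \<in> carrier M" using cadb submoduleE(1)[OF C] by auto
  have "x \<oplus>\<^bsub>M\<^esub> y = (c \<oplus>\<^bsub>M\<^esub> d) \<oplus>\<^bsub>M\<^esub> (a \<oplus> b) \<odot>\<^bsub>M\<^esub> v"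
    using cadb cd v by (simp add: smult_l_distr M.a_ac)
  then show "x \<oplus>\<^bsub>M\<^esub> y \<in> ?D" using cadb submoduleE(5)[OF C] by blast
qed

lemma linear_endoD:
  assumes "linear_endo R M f"
  shows "v \<in> carrier M \<Longrightarrow> f v \<in> carrier M"
    and "u \<in> carrier M \<Longrightarrow> v \<in> carrier M \<Longrightarrow> f (u \<oplus>\<^bsub>M\<^esub> v) = f u \<oplus>\<^bsub>M\<^esub> f v"
    and "a \<in> carrier R \<Longrightarrow> v \<in> carrier M \<Longrightarrow> f (a \<odot>\<^bsub>M\<^esub> v) = a \<odot>\<^bsub>M\<^esub> f v"
  using assms unfolding linear_endo_def by auto

lemma linear_endo_zero: "linear_endo R M f \<Longrightarrow> f \<zero>\<^bsub>M\<^esub> = \<zero>\<^bsub>M\<^esub>"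
  using linear_endoD(3)[of f \<zero> "\<zero>\<^bsub>M\<^esub>"] linear_endoD(1)[of f "\<zero>\<^bsub>M\<^esub>"] by simp

lemma linear_endo_neg:
  assumes f: "linear_endo R M f" and v: "v \<in> carrier M"
  shows "f (\<ominus>\<^bsub>M\<^esub> v) = \<ominus>\<^bsub>M\<^esub> f v"
  using linear_endoD(3)[OF f _ v, of "\<ominus> \<one>"] linear_endoD(1)[OF f v] v by (simp add: smult_l_minus)

lemma linear_endo_minus:
  assumes f: "linear_endo R M f" and u: "u \<in> carrier M" and v: "v \<in> carrier M"
  shows "f (u \<ominus>\<^bsub>M\<^esub> v) = f u \<ominus>\<^bsub>M\<^esub> f v"
  using linear_endoD(2)[OF f] linear_endo_neg[OF f] u v by (simp add: M.minus_eq)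

lemma submodule_image:
  assumes f: "linear_endo R M f" shows "submodule (f ` carrier M) R M"
proof (rule submoduleI)
  show "f ` carrier M \<subseteq> carrier M" using linear_endoD(1)[OF f] by auto
  show "\<zero>\<^bsub>M\<^esub> \<in> f ` carrier M" using linear_endo_zero[OF f] by force
next
  fix a assume "a \<in> f ` carrier M"
  then obtain u where u: "u \<in> carrier M" "a = f u" by auto
  have "\<ominus>\<^bsub>M\<^esub> a = f (\<ominus>\<^bsub>M\<^esub> u)" using linear_endo_neg[OF f u(1)] u(2) by simp
  then show "\<ominus>\<^bsub>M\<^esub> a \<in> f ` carrier M" using u(1) by simp
  fix r assume r: "r \<in> carrier R"
  then have "r \<odot>\<^bsub>M\<^esub> a = f (r \<odot>\<^bsub>M\<^esub> u)" using linear_endoD(3)[OF f r u(1)] u(2) by simp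
  then show "r \<odot>\<^bsub>M\<^esub> a \<in> f ` carrier M" using r u(1) by simp
next
  fix a b assume "a \<in> f ` carrier M" "b \<in> f ` carrier M"
  then obtain u w where uw: "u \<in> carrier M" "w \<in> carrier M" "a = f u" "b = f w" by auto
  then have "a \<oplus>\<^bsub>M\<^esub> b = f (u \<oplus>\<^bsub>M\<^esub> w)" using linear_endoD(2)[OF f] by simp
  then show "a \<oplus>\<^bsub>M\<^esub> b \<in> f ` carrier M" using uw by simp
qed

lemma submodule_kernel:
  assumes f: "linear_endo R M f" shows "submodule {v \<in> carrier M. f v = \<zero>\<^bsub>M\<^esub>} R M"
  by (rule submoduleI)
    (auto simp: linear_endo_zero[OF f] linear_endoD(2,3)[OF f] linear_endo_neg[OF f])

lemma linear_endo_of_relation: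
  assumes unique: "\<And>v. v \<in> carrier M \<Longrightarrow> \<exists>!d. P v d"
    and closed: "\<And>v d. v \<in> carrier M \<Longrightarrow> P v d \<Longrightarrow> d \<in> carrier M"
    and add: "\<And>u v d e. u \<in> carrier M \<Longrightarrow> v \<in> carrier M \<Longrightarrow> P u d \<Longrightarrow> P v e \<Longrightarrow>
                P (u \<oplus>\<^bsub>M\<^esub> v) (d \<oplus>\<^bsub>M\<^esub> e)"
    and smult: "\<And>a v d. a \<in> carrier R \<Longrightarrow> v \<in> carrier M \<Longrightarrow> P v d \<Longrightarrow> P (a \<odot>\<^bsub>M\<^esub> v) (a \<odot>\<^bsub>M\<^esub> d)"
  shows "linear_endo R M (\<lambda>v. THE d. P v d)"
proof -
  have P: "P v (THE d. P v d)" if "v \<in> carrier M" for v using unique[OF that] by (rule theI')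
  have eq: "(THE d. P v d) = d" if "v \<in> carrier M" "P v d" for v d
    using unique that by (blast intro: the1_equality)
  show ?thesis unfolding linear_endo_def
    using P closed eq add smult by (auto intro!: funcsetI)
qed

lemma unique_preimage_along_complements:
  assumes f: "linear_endo R M f"
    and C: "complementary R M (f ` carrier M) C"
    and D: "complementary R M {v \<in> carrier M. f v = \<zero>\<^bsub>M\<^esub>} D"
    and v: "v \<in> carrier M"
  shows "\<exists>!d. d \<in> D \<and> v \<ominus>\<^bsub>M\<^esub> f d \<in> C"
proof -
  note fD = linear_endoD[OF f]
  have C_sub: "submodule C R M" and WC: "f ` carrier M \<inter> C \<subseteq> {\<zero>\<^bsub>M\<^esub>}"
    and C_span: "\<forall>v\<in>carrier M. \<exists>w\<in>f ` carrier M. \<exists>c\<in>C. v = w \<oplus>\<^bsub>M\<^esub> c"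
    using C unfolding complementary_def by auto
  have D_sub: "submodule D R M" and ND: "{v \<in> carrier M. f v = \<zero>\<^bsub>M\<^esub>} \<inter> D \<subseteq> {\<zero>\<^bsub>M\<^esub>}"
    and D_span: "\<forall>v\<in>carrier M. \<exists>n\<in>{v \<in> carrier M. f v = \<zero>\<^bsub>M\<^esub>}. \<exists>d\<in>D. v = n \<oplus>\<^bsub>M\<^esub> d"
    using D unfolding complementary_def by auto
  have Cc: "c \<in> C \<Longrightarrow> c \<in> carrier M" and Dc: "d \<in> D \<Longrightarrow> d \<in> carrier M" for c d
    using submoduleE(1)[OF C_sub] submoduleE(1)[OF D_sub] by auto
  show ?thesis
  proof (rule ex_ex1I)
    obtain u c where u: "u \<in> carrier M" and c: "c \<in> C" and v_eq: "v = f u \<oplus>\<^bsub>M\<^esub> c"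
      using C_span v by auto
    obtain n d where n: "n \<in> carrier M" "f n = \<zero>\<^bsub>M\<^esub>" and d: "d \<in> D" and u_eq: "u = n \<oplus>\<^bsub>M\<^esub> d"
      using D_span u by auto
    have "f u = f d" using n d u_eq fD Dc by simp
    then have "v \<ominus>\<^bsub>M\<^esub> f d = c"
      using v_eq Cc[OF c] fD(1)[OF Dc[OF d]]
      by (simp add: M.minus_eq M.a_ac M.r_neg1 M.r_neg2 M.r_neg)
    then show "\<exists>d. d \<in> D \<and> v \<ominus>\<^bsub>M\<^esub> f d \<in> C" using c d by auto
  next
    fix d1 d2 assume d1: "d1 \<in> D \<and> v \<ominus>\<^bsub>M\<^esub> f d1 \<in> C" and d2: "d2 \<in> D \<and> v \<ominus>\<^bsub>M\<^esub> f d2 \<in> C"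
    have dc: "d1 \<in> carrier M" "d2 \<in> carrier M" using d1 d2 Dc by auto
    have "f (d1 \<ominus>\<^bsub>M\<^esub> d2) = (v \<ominus>\<^bsub>M\<^esub> f d2) \<ominus>\<^bsub>M\<^esub> (v \<ominus>\<^bsub>M\<^esub> f d1)"
      using linear_endo_minus[OF f dc] dc v fD(1)[OF dc(1)] fD(1)[OF dc(2)]
      by (simp add: M.minus_eq M.minus_add M.a_ac M.r_neg1 M.r_neg2)
    then have "f (d1 \<ominus>\<^bsub>M\<^esub> d2) \<in> C" using submodule_minus_closed[OF C_sub] d1 d2 by simp
    moreover have "f (d1 \<ominus>\<^bsub>M\<^esub> d2) \<in> f ` carrier M" using dc by simp
    ultimately have "f (d1 \<ominus>\<^bsub>M\<^esub> d2) = \<zero>\<^bsub>M\<^esub>" using WC by auto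
    then have "d1 \<ominus>\<^bsub>M\<^esub> d2 = \<zero>\<^bsub>M\<^esub>" using ND submodule_minus_closed[OF D_sub] d1 d2 dc by auto
    then show "d1 = d2" using dc M.minus_eq_zero_iff by auto
  qed
qed

abbreviation End where "End \<equiv> endomorphism_ring R M"

lemma End_simps:
  "f \<in> carrier End \<longleftrightarrow> linear_endo R M f \<and> f \<in> extensional (carrier M)"
  "f \<otimes>\<^bsub>End\<^esub> g = compose (carrier M) f g"
  "\<one>\<^bsub>End\<^esub> = (\<lambda>v\<in>carrier M. v)"
  "\<zero>\<^bsub>End\<^esub> = (\<lambda>v\<in>carrier M. \<zero>\<^bsub>M\<^esub>)"
  "f \<oplus>\<^bsub>End\<^esub> g = (\<lambda>v\<in>carrier M. f v \<oplus>\<^bsub>M\<^esub> g v)"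
  unfolding endomorphism_ring_def by simp_all

lemma linear_endo_restrict_add:
  assumes "linear_endo R M f" "linear_endo R M g"
  shows "linear_endo R M (\<lambda>v\<in>carrier M. f v \<oplus>\<^bsub>M\<^esub> g v)"
  using linear_endoD[OF assms(1)] linear_endoD[OF assms(2)]
  by (auto simp: linear_endo_def M.a_ac smult_r_distr)

lemma linear_endo_restrict_neg:
  assumes "linear_endo R M f"
  shows "linear_endo R M (\<lambda>v\<in>carrier M. \<ominus>\<^bsub>M\<^esub> f v)"
  using linear_endoD[OF assms]
  by (auto simp: linear_endo_def M.minus_add M.a_comm smult_r_minus)

lemma linear_endo_compose:
  assumes "linear_endo R M f" "linear_endo R M g"
  shows "linear_endo R M (compose (carrier M) f g)"
  using linear_endoD[OF assms(1)] linear_endoD[OF assms(2)]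
  by (auto simp: linear_endo_def compose_def)

lemma linear_endo_id: "linear_endo R M (\<lambda>v\<in>carrier M. v)"
  by (auto simp: linear_endo_def)

lemma linear_endo_zero_map: "linear_endo R M (\<lambda>v\<in>carrier M. \<zero>\<^bsub>M\<^esub>)"
  by (auto simp: linear_endo_def)

lemma abelian_group_End: "abelian_group End"
proof (rule abelian_groupI)
  fix f g assume "f \<in> carrier End" "g \<in> carrier End"
  then show "f \<oplus>\<^bsub>End\<^esub> g \<in> carrier End" by (simp add: End_simps linear_endo_restrict_add)
next
  show "\<zero>\<^bsub>End\<^esub> \<in> carrier End" by (simp add: End_simps linear_endo_zero_map)
next
  fix f g h assume "f \<in> carrier End" "g \<in> carrier End" "h \<in> carrier End"
  then show "f \<oplus>\<^bsub>End\<^esub> g \<oplus>\<^bsub>End\<^esub> h = f \<oplus>\<^bsub>End\<^esub> (g \<oplus>\<^bsub>End\<^esub> h)"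
    by (auto simp: End_simps M.a_assoc linear_endoD intro!: restrict_ext)
next
  fix f g assume "f \<in> carrier End" "g \<in> carrier End"
  then show "f \<oplus>\<^bsub>End\<^esub> g = g \<oplus>\<^bsub>End\<^esub> f"
    by (auto simp: End_simps M.a_comm linear_endoD intro!: restrict_ext)
next
  fix f assume f: "f \<in> carrier End"
  then show "\<zero>\<^bsub>End\<^esub> \<oplus>\<^bsub>End\<^esub> f = f"
    by (auto simp: End_simps linear_endoD intro!: restrict_eq_extensionalI)
  have "(\<lambda>v\<in>carrier M. \<ominus>\<^bsub>M\<^esub> f v) \<in> carrier End"
    using f by (simp add: End_simps linear_endo_restrict_neg)
  moreover have "(\<lambda>v\<in>carrier M. \<ominus>\<^bsub>M\<^esub> f v) \<oplus>\<^bsub>End\<^esub> f = \<zero>\<^bsub>End\<^esub>"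
    using f by (auto simp: End_simps linear_endoD M.l_neg intro!: restrict_ext)
  ultimately show "\<exists>g\<in>carrier End. g \<oplus>\<^bsub>End\<^esub> f = \<zero>\<^bsub>End\<^esub>" by auto
qed

lemma monoid_End: "monoid End"
proof (rule monoidI)
  fix f g assume "f \<in> carrier End" "g \<in> carrier End"
  then show "f \<otimes>\<^bsub>End\<^esub> g \<in> carrier End" by (simp add: End_simps linear_endo_compose)
next
  show "\<one>\<^bsub>End\<^esub> \<in> carrier End" by (simp add: End_simps linear_endo_id)
next
  fix f g h assume "f \<in> carrier End" "g \<in> carrier End" "h \<in> carrier End"
  then show "f \<otimes>\<^bsub>End\<^esub> g \<otimes>\<^bsub>End\<^esub> h = f \<otimes>\<^bsub>End\<^esub> (g \<otimes>\<^bsub>End\<^esub> h)"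
    using compose_assoc[of h "carrier M" "carrier M" f g] by (simp add: End_simps linear_endo_def)
next
  fix f assume "f \<in> carrier End"
  then show "\<one>\<^bsub>End\<^esub> \<otimes>\<^bsub>End\<^esub> f = f" "f \<otimes>\<^bsub>End\<^esub> \<one>\<^bsub>End\<^esub> = f"
    by (auto simp: End_simps compose_def linear_endoD intro!: restrict_eq_extensionalI)
qed

lemma ring_End: "ring End"
proof (rule ringI[OF abelian_group_End monoid_End])
  fix f g h assume "f \<in> carrier End" "g \<in> carrier End" "h \<in> carrier End"
  then show "(f \<oplus>\<^bsub>End\<^esub> g) \<otimes>\<^bsub>End\<^esub> h = f \<otimes>\<^bsub>End\<^esub> h \<oplus>\<^bsub>End\<^esub> g \<otimes>\<^bsub>End\<^esub> h"
    "h \<otimes>\<^bsub>End\<^esub> (f \<oplus>\<^bsub>End\<^esub> g) = h \<otimes>\<^bsub>End\<^esub> f \<oplus>\<^bsub>End\<^esub> h \<otimes>\<^bsub>End\<^esub> g"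
    by (auto simp: End_simps compose_def linear_endoD intro!: restrict_ext)
qed

end

context vector_space
begin

lemma add_line_disjoint:
  assumes W: "submodule W R M" and C: "submodule C R M" and WC: "W \<inter> C \<subseteq> {\<zero>\<^bsub>M\<^esub>}"
    and v: "v \<in> carrier M" and v_out: "\<not> (\<exists>w\<in>W. \<exists>c\<in>C. v = w \<oplus>\<^bsub>M\<^esub> c)"
  shows "W \<inter> {c \<oplus>\<^bsub>M\<^esub> a \<odot>\<^bsub>M\<^esub> v | c a. c \<in> C \<and> a \<in> carrier R} \<subseteq> {\<zero>\<^bsub>M\<^esub>}"
proof
  fix w assume "w \<in> W \<inter> {c \<oplus>\<^bsub>M\<^esub> a \<odot>\<^bsub>M\<^esub> v | c a. c \<in> C \<and> a \<in> carrier R}"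
  then obtain c a where w: "w \<in> W" and c: "c \<in> C" and a: "a \<in> carrier R"
    and w_eq: "w = c \<oplus>\<^bsub>M\<^esub> a \<odot>\<^bsub>M\<^esub> v" by auto
  have wc: "w \<in> carrier M" "c \<in> carrier M" using w c submoduleE(1)[OF W] submoduleE(1)[OF C] by auto
  show "w \<in> {\<zero>\<^bsub>M\<^esub>}"
  proof (cases "a = \<zero>")
    case True
    then have "w \<in> W \<inter> C" using w c w_eq wc v by simp
    then show ?thesis using WC by auto
  next
    case False
    then have a_inv: "inv a \<in> carrier R" "inv a \<otimes> a = \<one>" using a field_Units by auto
    have av: "a \<odot>\<^bsub>M\<^esub> v = w \<oplus>\<^bsub>M\<^esub> \<ominus>\<^bsub>M\<^esub> c" using w_eq wc v a by (simp add: M.a_comm M.r_neg1)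
    have "v = (inv a \<otimes> a) \<odot>\<^bsub>M\<^esub> v" using a_inv v by simp
    also have "\<dots> = inv a \<odot>\<^bsub>M\<^esub> (a \<odot>\<^bsub>M\<^esub> v)" using a_inv(1) a v by (rule smult_assoc1)
    also have "\<dots> = inv a \<odot>\<^bsub>M\<^esub> w \<oplus>\<^bsub>M\<^esub> inv a \<odot>\<^bsub>M\<^esub> (\<ominus>\<^bsub>M\<^esub> c)"
      using av a_inv wc by (simp add: smult_r_distr)
    finally have "v = inv a \<odot>\<^bsub>M\<^esub> w \<oplus>\<^bsub>M\<^esub> inv a \<odot>\<^bsub>M\<^esub> (\<ominus>\<^bsub>M\<^esub> c)" .
    moreover have "inv a \<odot>\<^bsub>M\<^esub> w \<in> W" "inv a \<odot>\<^bsub>M\<^esub> (\<ominus>\<^bsub>M\<^esub> c) \<in> C"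
      using a_inv w c submoduleE(3,4)[OF W] submoduleE(3,4)[OF C] by auto
    ultimately show ?thesis using v_out by blast
  qed
qed

lemma exists_complement:
  assumes W: "submodule W R M"
  shows "\<exists>C. complementary R M W C"
proof -
  let ?Z = "{C. submodule C R M \<and> W \<inter> C \<subseteq> {\<zero>\<^bsub>M\<^esub>}}"
  have "\<exists>C\<in>?Z. \<forall>D\<in>?Z. C \<subseteq> D \<longrightarrow> D = C"
  proof (rule subset_Zorn_nonempty)
    have "{\<zero>\<^bsub>M\<^esub>} \<in> ?Z" using submodule_zero by simp
    then show "?Z \<noteq> {}" by (metis empty_iff)
    fix \<C> assume ne: "\<C> \<noteq> {}" and chain: "subset.chain ?Z \<C>"
    then have "subset.chain {C. submodule C R M} \<C>" by (simp add: subset_chain_def subset_iff)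
    then have "submodule (\<Union>\<C>) R M" using ne by (rule submodule_chain_Union)
    moreover have "W \<inter> \<Union>\<C> \<subseteq> {\<zero>\<^bsub>M\<^esub>}" using chain by (auto simp: subset_chain_def)
    ultimately show "\<Union>\<C> \<in> ?Z" by simp
  qed
  then obtain C where C: "submodule C R M" "W \<inter> C \<subseteq> {\<zero>\<^bsub>M\<^esub>}"
    and max: "\<And>D. submodule D R M \<Longrightarrow> W \<inter> D \<subseteq> {\<zero>\<^bsub>M\<^esub>} \<Longrightarrow> C \<subseteq> D \<Longrightarrow> D = C"
    by auto
  have "\<exists>w\<in>W. \<exists>c\<in>C. v = w \<oplus>\<^bsub>M\<^esub> c" if v: "v \<in> carrier M" for v
  proof (rule ccontr)
    assume v_out: "\<not> (\<exists>w\<in>W. \<exists>c\<in>C. v = w \<oplus>\<^bsub>M\<^esub> c)"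
    let ?D = "{c \<oplus>\<^bsub>M\<^esub> a \<odot>\<^bsub>M\<^esub> v | c a. c \<in> C \<and> a \<in> carrier R}"
    have "C \<subseteq> ?D"
    proof
      fix c assume c: "c \<in> C"
      then have "c = c \<oplus>\<^bsub>M\<^esub> \<zero> \<odot>\<^bsub>M\<^esub> v" using submoduleE(1)[OF C(1)] v by auto
      then show "c \<in> ?D" using c by blast
    qed
    then have "?D = C"
      using max submodule_add_line[OF C(1) v] add_line_disjoint[OF W C v v_out] by blast
    moreover have "v \<in> ?D"
      using submodule_zero_closed[OF C(1)] v by (intro CollectI exI[of _ "\<zero>\<^bsub>M\<^esub>"] exI[of _ \<one>]) simp
    moreover have "v = \<zero>\<^bsub>M\<^esub> \<oplus>\<^bsub>M\<^esub> v" using v by simp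
    ultimately show False using v_out submodule_zero_closed[OF W] by auto
  qed
  then show ?thesis unfolding complementary_def using W C by blast
qed

lemma linear_endo_quasi_inverse:
  assumes f: "linear_endo R M f"
  shows "\<exists>g. linear_endo R M g \<and> (\<forall>v\<in>carrier M. f (g (f v)) = f v)"
proof -
  note fD = linear_endoD[OF f]
  obtain C where C: "complementary R M (f ` carrier M) C"
    using exists_complement[OF submodule_image[OF f]] by auto
  obtain D where D: "complementary R M {v \<in> carrier M. f v = \<zero>\<^bsub>M\<^esub>} D"
    using exists_complement[OF submodule_kernel[OF f]] by auto
  have C_sub: "submodule C R M" and D_sub: "submodule D R M" and WC: "f ` carrier M \<inter> C \<subseteq> {\<zero>\<^bsub>M\<^esub>}"
    using C D unfolding complementary_def by auto
  define P where "P v d \<longleftrightarrow> d \<in> D \<and> v \<ominus>\<^bsub>M\<^esub> f d \<in> C" for v d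
  have unique: "\<exists>!d. P v d" if "v \<in> carrier M" for v
    unfolding P_def using unique_preimage_along_complements[OF f C D that] .
  have closed: "d \<in> carrier M" if "P v d" for v d
    using that submoduleE(1)[OF D_sub] unfolding P_def by auto
  define g where "g v = (THE d. P v d)" for v
  have "linear_endo R M g" unfolding g_def
  proof (rule linear_endo_of_relation[OF unique closed])
    fix u v d e assume uv: "u \<in> carrier M" "v \<in> carrier M" and de: "P u d" "P v e"
    have "u \<oplus>\<^bsub>M\<^esub> v \<ominus>\<^bsub>M\<^esub> f (d \<oplus>\<^bsub>M\<^esub> e) = (u \<ominus>\<^bsub>M\<^esub> f d) \<oplus>\<^bsub>M\<^esub> (v \<ominus>\<^bsub>M\<^esub> f e)"
      using uv de closed fD by (simp add: M.minus_eq M.minus_add M.a_ac)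
    then show "P (u \<oplus>\<^bsub>M\<^esub> v) (d \<oplus>\<^bsub>M\<^esub> e)"
      using de submoduleE(5)[OF C_sub] submoduleE(5)[OF D_sub] unfolding P_def by auto
  next
    fix a v d assume a: "a \<in> carrier R" and v: "v \<in> carrier M" and d: "P v d"
    have "a \<odot>\<^bsub>M\<^esub> v \<ominus>\<^bsub>M\<^esub> f (a \<odot>\<^bsub>M\<^esub> d) = a \<odot>\<^bsub>M\<^esub> (v \<ominus>\<^bsub>M\<^esub> f d)"
      using a v d closed fD by (simp add: M.minus_eq smult_r_distr smult_r_minus)
    then show "P (a \<odot>\<^bsub>M\<^esub> v) (a \<odot>\<^bsub>M\<^esub> d)"
      using a d submoduleE(4)[OF C_sub] submoduleE(4)[OF D_sub] unfolding P_def by auto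
  qed
  moreover have "f (g (f v)) = f v" if v: "v \<in> carrier M" for v
  proof -
    have fv: "f v \<in> carrier M" using fD(1) v .
    have gfv: "P (f v) (g (f v))" unfolding g_def using unique[OF fv] by (rule theI')
    then have "f v \<ominus>\<^bsub>M\<^esub> f (g (f v)) \<in> C" unfolding P_def by auto
    moreover have "f v \<ominus>\<^bsub>M\<^esub> f (g (f v)) = f (v \<ominus>\<^bsub>M\<^esub> g (f v))"
      using linear_endo_minus[OF f v closed[OF gfv]] by simp
    moreover have "v \<ominus>\<^bsub>M\<^esub> g (f v) \<in> carrier M" using v closed[OF gfv] by simp
    ultimately have "f v \<ominus>\<^bsub>M\<^esub> f (g (f v)) = \<zero>\<^bsub>M\<^esub>" using WC by auto
    then show ?thesis using fv fD(1) closed[OF gfv] M.minus_eq_zero_iff by auto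
  qed
  ultimately show ?thesis by auto
qed

lemma von_neumann_regular_End: "von_neumann_regular End"
  unfolding von_neumann_regular_def
proof (intro conjI ballI)
  show "ring End" by (rule ring_End)
  fix f assume f: "f \<in> carrier End"
  obtain g where g: "linear_endo R M g" "\<forall>v\<in>carrier M. f (g (f v)) = f v"
    using linear_endo_quasi_inverse f by (auto simp: End_simps)
  let ?g = "\<lambda>v\<in>carrier M. g v"
  have "?g \<in> carrier End" using g(1) by (auto simp: End_simps linear_endo_def)
  moreover have "f \<otimes>\<^bsub>End\<^esub> ?g \<otimes>\<^bsub>End\<^esub> f = f"
    using f g by (auto simp: End_simps compose_def linear_endoD intro!: restrict_eq_extensionalI)
  ultimately show "\<exists>g\<in>carrier End. f = f \<otimes>\<^bsub>End\<^esub> g \<otimes>\<^bsub>End\<^esub> f" by metis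
qed

end

section \<open>The embedding\<close>

definition algebra_module ::
    "('f, 'c) ring_scheme \<Rightarrow> ('a, 'b) ring_scheme \<Rightarrow> ('f \<Rightarrow> 'a) \<Rightarrow> ('f, 'a) module" where
  "algebra_module F A phi =
     \<lparr>carrier = carrier A, monoid.mult = monoid.mult A, one = \<one>\<^bsub>A\<^esub>, ring.zero = \<zero>\<^bsub>A\<^esub>,
      add = add A, smult = (\<lambda>c v. phi c \<otimes>\<^bsub>A\<^esub> v)\<rparr>"

lemma vector_space_algebra_module:
  assumes alg: "algebra_via F A phi"
  shows "vector_space F (algebra_module F A phi)"
proof -
  interpret F: field F using alg unfolding algebra_via_def by blast
  interpret A: ring A using alg unfolding algebra_via_def by blast
  interpret \<Phi>: ring_hom_ring F A phi
    using F.ring_axioms A.ring_axioms alg unfolding algebra_via_def by (intro ring_hom_ringI2) auto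
  have "abelian_group (algebra_module F A phi)"
    by (rule abelian_groupI) (auto simp: algebra_module_def A.a_ac intro: A.l_neg)
  then have "module F (algebra_module F A phi)"
    by (intro moduleI F.is_cring)
      (auto simp: algebra_module_def A.r_distr A.l_distr A.m_assoc)
  then show ?thesis by (intro vector_space.intro F.field_axioms)
qed

lemma left_mult_ring_hom:
  assumes alg: "algebra_via F A phi"
  shows "(\<lambda>a. \<lambda>v\<in>carrier A. a \<otimes>\<^bsub>A\<^esub> v) \<in> ring_hom A (endomorphism_ring F (algebra_module F A phi))"
    (is "?L \<in> ring_hom A ?E")
proof -
  interpret A: ring A using alg unfolding algebra_via_def by blast
  have phi: "phi \<in> carrier F \<rightarrow> carrier A"
    and central: "\<And>c a. c \<in> carrier F \<Longrightarrow> a \<in> carrier A \<Longrightarrow> phi c \<otimes>\<^bsub>A\<^esub> a = a \<otimes>\<^bsub>A\<^esub> phi c"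
    using alg unfolding algebra_via_def ring_hom_def by auto
  have linear: "linear_endo F (algebra_module F A phi) (?L a)" if a: "a \<in> carrier A" for a
  proof -
    have "a \<otimes>\<^bsub>A\<^esub> (phi c \<otimes>\<^bsub>A\<^esub> v) = phi c \<otimes>\<^bsub>A\<^esub> (a \<otimes>\<^bsub>A\<^esub> v)"
      if "c \<in> carrier F" "v \<in> carrier A" for c v
      using that a phi central by (metis A.m_assoc Pi_iff)
    then show ?thesis using a phi by (auto simp: linear_endo_def algebra_module_def A.r_distr)
  qed
  show ?thesis
  proof (rule ring_hom_memI)
    fix a assume "a \<in> carrier A"
    then show "?L a \<in> carrier ?E"
      using linear by (simp add: endomorphism_ring_def algebra_module_def)
  next
    fix a b assume "a \<in> carrier A" "b \<in> carrier A"
    then show "?L (a \<otimes>\<^bsub>A\<^esub> b) = ?L a \<otimes>\<^bsub>?E\<^esub> ?L b" "?L (a \<oplus>\<^bsub>A\<^esub> b) = ?L a \<oplus>\<^bsub>?E\<^esub> ?L b"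
      by (auto simp: endomorphism_ring_def algebra_module_def compose_def A.m_assoc A.l_distr)
  next
    show "?L \<one>\<^bsub>A\<^esub> = \<one>\<^bsub>?E\<^esub>" by (auto simp: endomorphism_ring_def algebra_module_def)
  qed
qed

lemma (in ring) inj_on_left_mult: "inj_on (\<lambda>a. \<lambda>v\<in>carrier R. a \<otimes> v) (carrier R)"
proof (rule inj_onI)
  fix a b assume "a \<in> carrier R" "b \<in> carrier R" "(\<lambda>v\<in>carrier R. a \<otimes> v) = (\<lambda>v\<in>carrier R. b \<otimes> v)"
  then show "a = b" by (metis one_closed r_one restrict_apply')
qed

lemma ring_hom_into_subring:
  assumes "h \<in> ring_hom A E" "h ` carrier A \<subseteq> T"
  shows "h \<in> ring_hom A (E\<lparr>carrier := T\<rparr>)"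
  using assms unfolding ring_hom_def by auto

theorem countable_prime_algebra_embeds_in_prime_vnr:
  assumes alg: "algebra_via F A phi" and A: "prime_ring A" and cnt: "countable (carrier A)"
  shows "\<exists>(R :: nat ring) h. ring R \<and> countable (carrier R) \<and> prime_ring R \<and>
           von_neumann_regular R \<and> h \<in> ring_hom A R \<and> inj_on h (carrier A) \<and>
           (\<forall>J. ideal J R \<and> J \<noteq> {\<zero>\<^bsub>R\<^esub>} \<longrightarrow> J \<inter> h ` carrier A \<noteq> {\<zero>\<^bsub>R\<^esub>})"
proof -
  let ?E = "endomorphism_ring F (algebra_module F A phi)"
  let ?L = "\<lambda>a. \<lambda>v\<in>carrier A. a \<otimes>\<^bsub>A\<^esub> v"
  interpret V: vector_space F "algebra_module F A phi"
    using alg by (rule vector_space_algebra_module)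
  have L: "?L \<in> ring_hom A ?E" using alg by (rule left_mult_ring_hom)
  have "?L ` carrier A \<subseteq> carrier ?E" using ring_hom_closed[OF L] by auto
  then obtain T where T: "subring T ?E" "?L ` carrier A \<subseteq> T" "countable T"
    and vnr: "von_neumann_regular (?E\<lparr>carrier := T\<rparr>)"
    using countable_vnr_subring[OF V.von_neumann_regular_End _ countable_image[OF cnt]] by meson
  show ?thesis
  proof (rule countable_prime_vnr_essential_quotient[OF vnr _ A])
    show "countable (carrier (?E\<lparr>carrier := T\<rparr>))" using T(3) by simp
    show "?L \<in> ring_hom A (?E\<lparr>carrier := T\<rparr>)" using L T(2) by (rule ring_hom_into_subring)
    show "inj_on ?L (carrier A)"
      using A unfolding prime_ring_def by (simp add: ring.inj_on_left_mult)
  qed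
qed

lemma countable_carrier_if_iso:
  assumes "F \<simeq> G" "countable (carrier G)"
  shows "countable (carrier F)"
proof -
  obtain g where "g \<in> ring_iso F G" using assms(1) unfolding is_ring_iso_def by blast
  then have "inj_on g (carrier F)" "g ` carrier F = carrier G"
    unfolding ring_iso_def bij_betw_def by auto
  then show ?thesis using assms(2) by (metis countable_image_inj_on)
qed

lemma countable_carrier_ZFact: "countable (carrier (ZFact n))"
  by (simp add: ZFact_def FactRing_def A_RCOSETS_def')

theorem mainTheorem9:
  fixes F :: "('f, 'c) ring_scheme" and A :: "('a, 'b) ring_scheme"
    and phi :: "'f \<Rightarrow> 'a" and x y :: 'a
  assumes F_prime: "F \<simeq> rat_ring \<or> (\<exists>p::nat. Factorial_Ring.prime p \<and> F \<simeq> ZFact (int p))"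
    and alg: "algebra_via F A phi"
    and primeA: "prime_ring A"
    and xy: "x \<in> carrier A" "y \<in> carrier A"
    and gen: "generate_ring A (phi ` carrier F \<union> {x, y}) = carrier A"
    and pnx: "principally_nilpotent A x"
    and pny: "principally_nilpotent A y"
    and mnn: "minimal_non_nilpotent A (x \<oplus>\<^bsub>A\<^esub> y)"
    and J: "{x \<otimes>\<^bsub>A\<^esub> a \<oplus>\<^bsub>A\<^esub> y \<otimes>\<^bsub>A\<^esub> b | a b. a \<in> carrier A \<and> b \<in> carrier A}
              = jacobson_radical A"
    and uniq_r: "{I. maximal_right_ideal I A} = {jacobson_radical A}"
    and uniq_l: "{I. maximal_left_ideal I A} = {jacobson_radical A}"
  shows "\<exists>(R :: nat ring) h. ring R \<and> countable (carrier R) \<and> prime_ring R \<and>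
           von_neumann_regular R \<and> h \<in> ring_hom A R \<and> inj_on h (carrier A) \<and>
           (\<forall>J. ideal J R \<and> J \<noteq> {\<zero>\<^bsub>R\<^esub>} \<longrightarrow> J \<inter> h ` carrier A \<noteq> {\<zero>\<^bsub>R\<^esub>})"
proof -
  from F_prime have "countable (carrier F)"
  proof
    assume "F \<simeq> rat_ring"
    then show ?thesis by (rule countable_carrier_if_iso) (simp add: rat_ring_def)
  next
    assume "\<exists>p::nat. Factorial_Ring.prime p \<and> F \<simeq> ZFact (int p)"
    then obtain p :: nat where "F \<simeq> ZFact (int p)" by auto
    then show ?thesis using countable_carrier_ZFact by (rule countable_carrier_if_iso)
  qed
  then have "countable (carrier A)"
    using countable_generate_ring[of "phi ` carrier F \<union> {x, y}" A] gen by simp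
  with alg primeA show ?thesis by (rule countable_prime_algebra_embeds_in_prime_vnr)
qed

end
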